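(* Let $m\geq 13$ and $n\geq 13$ be integers with $m\not\equiv 2\pmod 3$ and $n\not\equiv 2\pmod 3$. Then $\gamma_{sR}(C_m\vee C_n)=3$.
   Context: $C_n$ denotes the cycle on $n$ vertices. For a graph $G=(V,E)$ and $x\in V$, $N_G[x]=\{x\}\cup\{y: xy\in E\}$. A signed Roman dominating function (SRDF) on $G$ is a function $f:V\to\{-1,1,2\}$ such that (a) $\sum_{y\in N_G[x]}f(y)\geq 1$ for every $x\in V$, and (b) every vertex $x$ with $f(x)=-1$ is adjacent to at least one vertex $y$ with $f(y)=2$. The weight of $f$ is $\sum_{x\in V}f(x)$, and $\gamma_{sR}(G)$ is the minimum weight of an SRDF on $G$. The join $G_1\vee G_2$ of two graphs has vertex set $V(G_1)\cup V(G_2)$ (disjoint union) and edge set $E(G_1)\cup E(G_2)\cup\{uv: u\in V(G_1), v\in V(G_2)\}$. *)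

theory Defs
  imports Main
begin

text \<open>A (simple) graph is given by a vertex set V and a symmetric, irreflexive
adjacency relation adj.\<close>

definition closed_nbhd :: "'a set \<Rightarrow> ('a \<Rightarrow> 'a \<Rightarrow> bool) \<Rightarrow> 'a \<Rightarrow> 'a set" where
  "closed_nbhd V adj x = insert x {y \<in> V. adj x y}"

definition is_SRDF :: "'a set \<Rightarrow> ('a \<Rightarrow> 'a \<Rightarrow> bool) \<Rightarrow> ('a \<Rightarrow> int) \<Rightarrow> bool" where
  "is_SRDF V adj f \<longleftrightarrow>
     (\<forall>x\<in>V. f x \<in> {-1, 1, 2}) \<and>
     (\<forall>x\<in>V. (\<Sum>y\<in>closed_nbhd V adj x. f y) \<ge> 1) \<and>
     (\<forall>x\<in>V. f x = -1 \<longrightarrow> (\<exists>y\<in>V. adj x y \<and> f y = 2))"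

definition weight :: "'a set \<Rightarrow> ('a \<Rightarrow> int) \<Rightarrow> int" where
  "weight V f = (\<Sum>x\<in>V. f x)"

text \<open>Signed Roman domination number: minimum weight of an SRDF (V finite).
Functions are only relevant on V; the set of weights is finite and nonempty
(the constant function 1 is an SRDF).\<close>
definition gamma_sR :: "'a set \<Rightarrow> ('a \<Rightarrow> 'a \<Rightarrow> bool) \<Rightarrow> int" where
  "gamma_sR V adj = Min {weight V f | f. is_SRDF V adj f}"

definition cycle_V :: "nat \<Rightarrow> nat set" where
  "cycle_V n = {0..<n}"

definition cycle_adj :: "nat \<Rightarrow> nat \<Rightarrow> nat \<Rightarrow> bool" where
  "cycle_adj n i j \<longleftrightarrow> i < n \<and> j < n \<and> i \<noteq> j \<and> (j = (i + 1) mod n \<or> i = (j + 1) mod n)"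

definition join_V :: "'a set \<Rightarrow> 'b set \<Rightarrow> ('a + 'b) set" where
  "join_V V1 V2 = V1 <+> V2"

fun join_adj :: "('a \<Rightarrow> 'a \<Rightarrow> bool) \<Rightarrow> ('b \<Rightarrow> 'b \<Rightarrow> bool) \<Rightarrow> ('a + 'b) \<Rightarrow> ('a + 'b) \<Rightarrow> bool" where
  "join_adj adj1 adj2 (Inl a) (Inl b) = adj1 a b"
| "join_adj adj1 adj2 (Inr a) (Inr b) = adj2 a b"
| "join_adj adj1 adj2 (Inl a) (Inr b) = True"
| "join_adj adj1 adj2 (Inr a) (Inl b) = True"

end

theory Submission
  imports Defs "HOL-Number_Theory.Cong"
begin

text \<open>Let \<open>S\<^sub>1\<close>, \<open>S\<^sub>2\<close> be the weights of an SRDF on the two cycles. Every vertex of \<open>C\<^sub>m\<close> is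
adjacent to all of \<open>C\<^sub>n\<close>, so the three values around it sum to at least \<open>1 - S\<^sub>2\<close>; summing over
the cycle gives \<open>3 S\<^sub>1 \<ge> m (1 - S\<^sub>2)\<close>, and symmetrically. For \<open>m, n \<ge> 7\<close> a weight below 3
therefore forces \<open>S\<^sub>1 = S\<^sub>2 = 1\<close>, leaving on \<open>C\<^sub>m\<close> values in \<open>{-1, 1, 2}\<close> with sum 1 all of
whose windows of three consecutive values are nonnegative. Without a 2 every window is at least 1,
so the sum is at least \<open>m / 3\<close>. If \<open>m = 3t + 1\<close>, cutting the cycle after a vertex \<open>v\<close> into
\<open>t\<close> windows shows that \<open>v\<close> has value at most 1. If \<open>m = 3t\<close>, the \<open>t\<close> windows of a cut sum to 1,
so every window is at most 1, and a 2 forces the periodic pattern \<open>2, -1, -1\<close> of sum 0.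
Weight 3 is attained by the pattern \<open>2, -1, -1, \<dots>\<close> on both cycles, with weight 2 on \<open>C\<^sub>m\<close>
and one 2 lowered to 1 on \<open>C\<^sub>n\<close>.\<close>

lemma sum_periodic_shift:
  fixes G :: "nat \<Rightarrow> 'a::cancel_comm_monoid_add"
  assumes periodic: "\<And>k. G (k + m) = G k"
  shows "(\<Sum>j<m. G (k + j)) = (\<Sum>j<m. G j)"
proof (induction k)
  case (Suc k)
  have "(\<Sum>j<m. G (Suc k + j)) + G k = (\<Sum>j<Suc m. G (k + j))"
    by (subst sum.lessThan_Suc_shift) (simp add: add.commute)
  also have "\<dots> = (\<Sum>j<m. G (k + j)) + G k"
    using periodic[of k] by simp
  finally show ?case
    using Suc.IH by simp
qed simp

lemma sum_periodic_windows:
  fixes G :: "nat \<Rightarrow> int"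
  assumes "\<And>k. G (k + m) = G k"
  shows "(\<Sum>k<m. G k + G (k + 1) + G (k + 2)) = 3 * (\<Sum>k<m. G k)"
proof -
  have shift: "(\<Sum>k<m. G (k + d)) = (\<Sum>k<m. G k)" for d
    using sum_periodic_shift[of G m d, OF assms] by (simp add: add.commute)
  show ?thesis
    unfolding sum.distrib shift by simp
qed

lemma sum_lessThan_triples:
  fixes G :: "nat \<Rightarrow> 'a::comm_monoid_add"
  shows "(\<Sum>j<3*t. G (k + j)) = (\<Sum>i<t. G (k + 3*i) + G (k + 3*i + 1) + G (k + 3*i + 2))"
proof (induction t)
  case (Suc t)
  have "3 * Suc t = Suc (Suc (Suc (3*t)))" by simp
  then show ?case
    unfolding \<open>3 * Suc t = _\<close> using Suc.IH by (simp add: add.assoc)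
qed simp

lemma period_sum_ne_1:
  fixes G :: "nat \<Rightarrow> int"
  assumes periodic: "\<And>k. G (k + m) = G k"
    and m: "4 \<le> m" "m mod 3 \<noteq> 2"
    and range_G: "\<And>k. G k \<in> {-1, 1, 2}"
    and windows: "\<And>k. G k + G (k + 1) + G (k + 2) \<ge> 0"
  shows "(\<Sum>k<m. G k) \<noteq> 1"
proof
  assume sum_1: "(\<Sum>k<m. G k) = 1"
  define W where "W k = G k + G (k + 1) + G (k + 2)" for k
  have W_nonneg: "0 \<le> W k" for k
    using windows unfolding W_def .
  have sum_from: "(\<Sum>j<m. G (k + j)) = 1" for k
    using sum_periodic_shift[of G m, OF periodic] sum_1 by simp
  have sum_triples: "(\<Sum>j<3*t. G (k + j)) = (\<Sum>i<t. W (k + 3*i))" for t k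
    unfolding W_def sum_lessThan_triples by (simp add: add.assoc)
  have "\<exists>p. G p = 2"
  proof (rule ccontr)
    assume "\<nexists>p. G p = 2"
    \<comment> \<open>then every window is a sum of three odd numbers, hence at least 1\<close>
    then have "1 \<le> W k" for k
      using range_G[of k] range_G[of "k + 1"] range_G[of "k + 2"] windows[of k]
      unfolding W_def by auto
    then have "int m \<le> (\<Sum>k<m. W k)"
      using sum_mono[of "{..<m}" "\<lambda>_. 1" W] by simp
    also have "\<dots> = 3"
      unfolding W_def sum_periodic_windows[of G m, OF periodic] sum_1 by simp
    finally show False
      using m(1) by simp
  qed
  then obtain p where p: "G p = 2" ..
  define t where "t = m div 3"
  have "m = 3*t \<or> m = 3*t + 1"
    using m(2) unfolding t_def by presburger
  then show False
  proof
    assume m_eq: "m = 3*t + 1"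
    have "1 = (\<Sum>j<3*t + 1. G (p + 1 + j))"
      using sum_from[of "p + 1"] m_eq by simp
    also have "\<dots> = (\<Sum>j<3*t. G (p + 1 + j)) + G (p + m)"
      using m_eq by (simp add: ac_simps)
    also have "\<dots> = (\<Sum>i<t. W (p + 1 + 3*i)) + G p"
      unfolding sum_triples periodic ..
    also have "\<dots> \<ge> G p"
      using W_nonneg by (simp add: sum_nonneg)
    finally show False
      using p by simp
  next
    assume m_eq: "m = 3*t"
    then have "0 < t"
      using m(1) by simp
    have window_le_1: "W k \<le> 1" for k
    proof -
      have "W (k + 3*0) \<le> (\<Sum>i<t. W (k + 3*i))"
        by (rule member_le_sum) (use W_nonneg \<open>0 < t\<close> in auto)
      also have "\<dots> = 1"
        using sum_triples[where t=t and k=k] sum_from[of k] m_eq by simp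
      finally show ?thesis
        by simp
    qed
    \<comment> \<open>a 2 forces the pattern 2, -1, -1, 2, so every block of three after it sums to 0\<close>
    have next_2: "G (q + 1) = -1 \<and> G (q + 2) = -1 \<and> G (q + 3) = 2" if "G q = 2" for q
    proof -
      have "G (q + 1) + G (q + 2) \<le> -1"
        using window_le_1[of q] that unfolding W_def by simp
      then have "G (q + 1) = -1 \<and> G (q + 2) = -1"
        using range_G[of "q + 1"] range_G[of "q + 2"] by auto
      moreover have "G (q + 1) + G (q + 2) + G (q + 3) \<ge> 0"
        using windows[of "q + 1"] by (simp add: add.assoc numeral_3_eq_3)
      ultimately show ?thesis
        using range_G[of "q + 3"] by auto
    qed
    have "G (p + 3*i) = 2" for i
    proof (induction i)
      case (Suc i)
      have "p + 3 * Suc i = p + 3*i + 3"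
        by simp
      then show ?case
        using next_2[OF Suc.IH] by (simp only:)
    qed (use p in simp)
    then have "W (p + 3*i) = 0" for i
      using next_2 unfolding W_def by simp
    then show False
      using sum_triples[where t=t and k=p] sum_from[of p] m_eq by simp
  qed
qed

lemma mod_ne_add_mod:
  fixes x d m :: nat
  assumes "0 < d" "d < m"
  shows "x mod m \<noteq> (x + d) mod m"
proof
  assume "x mod m = (x + d) mod m"
  then have "m dvd d"
    using mod_eq_dvd_iff_nat[of x "x + d" m] by simp
  with assms show False
    by (simp add: nat_dvd_not_less)
qed

lemma cycle_V_eq_lessThan: "cycle_V m = {..<m}"
  unfolding cycle_V_def by (rule atLeast0LessThan)

lemma closed_nbhd_cycle:
  assumes "3 \<le> m"
  shows "closed_nbhd (cycle_V m) (cycle_adj m) ((k + 1) mod m) = {k mod m, (k + 1) mod m, (k + 2) mod m}"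
proof -
  have succ: "((k + 1) mod m + 1) mod m = (k + 2) mod m"
    by (simp add: mod_simps)
  have pred: "Suc j mod m = Suc k mod m \<longleftrightarrow> j = k mod m" if "j < m" for j
    using cong_add_rcancel_nat[of j 1 k m] that unfolding cong_def by simp
  have "k mod m \<noteq> (k + 1) mod m" "(k + 1) mod m \<noteq> (k + 2) mod m"
    using mod_ne_add_mod[of 1 m k] mod_ne_add_mod[of 1 m "k + 1"] assms by simp_all
  then show ?thesis
    using assms unfolding closed_nbhd_def cycle_V_def cycle_adj_def succ
    by (auto simp: pred eq_commute[of "Suc k mod m"] mod_Suc_eq)
qed

lemma sum_closed_nbhd_cycle:
  fixes g :: "nat \<Rightarrow> 'a::comm_monoid_add"
  assumes "3 \<le> m"
  shows "(\<Sum>y\<in>closed_nbhd (cycle_V m) (cycle_adj m) ((k + 1) mod m). g y)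
           = g (k mod m) + g ((k + 1) mod m) + g ((k + 2) mod m)"
proof -
  have "k mod m \<noteq> (k + 1) mod m" "k mod m \<noteq> (k + 2) mod m" "(k + 1) mod m \<noteq> (k + 2) mod m"
    using mod_ne_add_mod[of 1 m k] mod_ne_add_mod[of 2 m k] mod_ne_add_mod[of 1 m "k + 1"] assms
    by simp_all
  then show ?thesis
    unfolding closed_nbhd_cycle[OF assms] by (simp add: add.assoc)
qed

lemma closed_nbhd_sums_cycle_ge_iff:
  fixes g :: "nat \<Rightarrow> 'a::ordered_comm_monoid_add"
  assumes "3 \<le> m"
  shows "(\<forall>i\<in>cycle_V m. c \<le> (\<Sum>y\<in>closed_nbhd (cycle_V m) (cycle_adj m) i. g y))
           \<longleftrightarrow> (\<forall>k. c \<le> g (k mod m) + g ((k + 1) mod m) + g ((k + 2) mod m))"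
proof
  assume nbhds: "\<forall>i\<in>cycle_V m. c \<le> (\<Sum>y\<in>closed_nbhd (cycle_V m) (cycle_adj m) i. g y)"
  show "\<forall>k. c \<le> g (k mod m) + g ((k + 1) mod m) + g ((k + 2) mod m)"
  proof
    fix k
    have "(k + 1) mod m \<in> cycle_V m"
      using assms by (simp add: cycle_V_eq_lessThan)
    then show "c \<le> g (k mod m) + g ((k + 1) mod m) + g ((k + 2) mod m)"
      using nbhds sum_closed_nbhd_cycle[OF assms, of g k] by metis
  qed
next
  assume windows: "\<forall>k. c \<le> g (k mod m) + g ((k + 1) mod m) + g ((k + 2) mod m)"
  show "\<forall>i\<in>cycle_V m. c \<le> (\<Sum>y\<in>closed_nbhd (cycle_V m) (cycle_adj m) i. g y)"
  proof
    fix i assume "i \<in> cycle_V m"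
    then have "i = (i + (m - 1) + 1) mod m"
      by (simp add: cycle_V_eq_lessThan)
    then show "c \<le> (\<Sum>y\<in>closed_nbhd (cycle_V m) (cycle_adj m) i. g y)"
      using windows sum_closed_nbhd_cycle[OF assms, of g "i + (m - 1)"] by metis
  qed
qed

lemma sum_closed_nbhd_sums_cycle:
  fixes g :: "nat \<Rightarrow> int"
  assumes "3 \<le> m"
  shows "(\<Sum>i\<in>cycle_V m. \<Sum>y\<in>closed_nbhd (cycle_V m) (cycle_adj m) i. g y) = 3 * weight (cycle_V m) g"
proof -
  define G where "G k = g (k mod m)" for k
  have periodic: "G (k + m) = G k" for k
    unfolding G_def by simp
  define W where "W k = G k + G (k + 1) + G (k + 2)" for k
  have W_periodic: "W (k + m) = W k" for k
    unfolding W_def using periodic[of k] periodic[of "k + 1"] periodic[of "k + 2"]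
    by (simp add: ac_simps)
  have "(\<Sum>i\<in>cycle_V m. \<Sum>y\<in>closed_nbhd (cycle_V m) (cycle_adj m) i. g y)
          = (\<Sum>j<m. \<Sum>y\<in>closed_nbhd (cycle_V m) (cycle_adj m) ((m - 1 + j + 1) mod m). g y)"
    unfolding cycle_V_eq_lessThan using assms by (intro sum.cong) simp_all
  also have "\<dots> = (\<Sum>j<m. W (m - 1 + j))"
    unfolding sum_closed_nbhd_cycle[OF assms] W_def G_def by (simp add: add.assoc)
  also have "\<dots> = (\<Sum>k<m. W k)"
    by (rule sum_periodic_shift) (simp add: W_periodic)
  also have "\<dots> = 3 * (\<Sum>k<m. G k)"
    unfolding W_def by (rule sum_periodic_windows) (rule periodic)
  finally show ?thesis
    by (simp add: G_def weight_def cycle_V_eq_lessThan)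
qed

lemma closed_nbhd_join_Inl:
  assumes "x \<in> V1"
  shows "closed_nbhd (join_V V1 V2) (join_adj adj1 adj2) (Inl x) = Inl ` closed_nbhd V1 adj1 x \<union> Inr ` V2"
  using assms unfolding closed_nbhd_def join_V_def by (auto elim: join_adj.elims)

lemma closed_nbhd_join_Inr:
  assumes "y \<in> V2"
  shows "closed_nbhd (join_V V1 V2) (join_adj adj1 adj2) (Inr y) = Inl ` V1 \<union> Inr ` closed_nbhd V2 adj2 y"
  using assms unfolding closed_nbhd_def join_V_def by (auto elim: join_adj.elims)

lemma weight_join:
  assumes "finite V1" "finite V2"
  shows "weight (join_V V1 V2) f = weight V1 (f \<circ> Inl) + weight V2 (f \<circ> Inr)"
  unfolding weight_def join_V_def using assms by (rule sum.Plus)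

lemma finite_closed_nbhd: "finite V \<Longrightarrow> finite (closed_nbhd V adj x)"
  unfolding closed_nbhd_def by simp

lemma sum_closed_nbhd_join_Inl:
  assumes "finite V1" "finite V2" "x \<in> V1"
  shows "(\<Sum>z\<in>closed_nbhd (join_V V1 V2) (join_adj adj1 adj2) (Inl x). f z)
           = (\<Sum>z\<in>closed_nbhd V1 adj1 x. f (Inl z)) + weight V2 (f \<circ> Inr)"
  unfolding closed_nbhd_join_Inl[OF assms(3)] weight_def
  using assms finite_closed_nbhd[OF assms(1)]
  by (subst sum.union_disjoint) (auto simp: sum.reindex)

lemma sum_closed_nbhd_join_Inr:
  assumes "finite V1" "finite V2" "y \<in> V2"
  shows "(\<Sum>z\<in>closed_nbhd (join_V V1 V2) (join_adj adj1 adj2) (Inr y). f z)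
           = weight V1 (f \<circ> Inl) + (\<Sum>z\<in>closed_nbhd V2 adj2 y. f (Inr z))"
  unfolding closed_nbhd_join_Inr[OF assms(3)] weight_def
  using assms finite_closed_nbhd[OF assms(2)]
  by (subst sum.union_disjoint) (auto simp: sum.reindex)

lemma is_SRDF_join_case_sumI:
  assumes fin: "finite V1" "finite V2"
    and range1: "\<forall>x\<in>V1. g1 x \<in> {-1, 1, 2}" and range2: "\<forall>y\<in>V2. g2 y \<in> {-1, 1, 2}"
    and nbhd1: "\<forall>x\<in>V1. 1 \<le> (\<Sum>z\<in>closed_nbhd V1 adj1 x. g1 z) + weight V2 g2"
    and nbhd2: "\<forall>y\<in>V2. 1 \<le> weight V1 g1 + (\<Sum>z\<in>closed_nbhd V2 adj2 y. g2 z)"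
    and two1: "\<exists>x\<in>V1. g1 x = 2" and two2: "\<exists>y\<in>V2. g2 y = 2"
  shows "is_SRDF (join_V V1 V2) (join_adj adj1 adj2) (case_sum g1 g2)"
  unfolding is_SRDF_def
proof (intro conjI ballI impI)
  fix v assume "v \<in> join_V V1 V2"
  then show "case_sum g1 g2 v \<in> {-1, 1, 2}"
    using range1 range2 by (auto simp: join_V_def)
next
  fix v assume v: "v \<in> join_V V1 V2"
  show "1 \<le> (\<Sum>z\<in>closed_nbhd (join_V V1 V2) (join_adj adj1 adj2) v. case_sum g1 g2 z)"
  proof (cases v)
    case (Inl x)
    then show ?thesis
      using v nbhd1 sum_closed_nbhd_join_Inl[OF fin] by (auto simp: join_V_def comp_def)
  next
    case (Inr y)
    then show ?thesis
      using v nbhd2 sum_closed_nbhd_join_Inr[OF fin] by (auto simp: join_V_def comp_def)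
  qed
next
  fix v assume "v \<in> join_V V1 V2"
  show "\<exists>w\<in>join_V V1 V2. join_adj adj1 adj2 v w \<and> case_sum g1 g2 w = 2"
  proof (cases v)
    case (Inl x)
    then show ?thesis
      using two2 unfolding join_V_def by force
  next
    case (Inr y)
    then show ?thesis
      using two1 unfolding join_V_def by force
  qed
qed

lemma gamma_sR_eqI:
  assumes "finite V" and srdf: "is_SRDF V adj f"
    and minimal: "\<And>g. is_SRDF V adj g \<Longrightarrow> weight V f \<le> weight V g"
  shows "gamma_sR V adj = weight V f"
proof -
  define W where "W = {weight V g | g. is_SRDF V adj g}"
  have "weight V g \<le> int (card V) * 2" if "is_SRDF V adj g" for g
    unfolding weight_def by (rule sum_bounded_above) (use that in \<open>auto simp: is_SRDF_def\<close>)
  then have "W \<subseteq> {weight V f .. int (card V) * 2}"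
    using minimal unfolding W_def by auto
  then have "finite W"
    using finite_subset by blast
  then have "Min W = weight V f"
    by (rule Min_eqI) (use srdf minimal in \<open>auto simp: W_def\<close>)
  then show ?thesis
    unfolding gamma_sR_def W_def .
qed

lemma SRDF_join_cycles_weight_ge_3:
  assumes m: "7 \<le> m" "m mod 3 \<noteq> 2" and n: "7 \<le> n"
    and srdf: "is_SRDF (join_V (cycle_V m) (cycle_V n)) (join_adj (cycle_adj m) (cycle_adj n)) f"
  shows "3 \<le> weight (join_V (cycle_V m) (cycle_V n)) f"
proof (rule ccontr)
  assume below_3: "\<not> ?thesis"
  define g where "g = f \<circ> Inl"
  define h where "h = f \<circ> Inr"
  define S1 where "S1 = weight (cycle_V m) g"
  define S2 where "S2 = weight (cycle_V n) h"
  have fin: "finite (cycle_V k)" for k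
    by (simp add: cycle_V_def)
  have light: "S1 + S2 \<le> 2"
    using below_3 weight_join[OF fin fin] unfolding S1_def S2_def g_def h_def by simp
  have nbhd_m: "1 - S2 \<le> (\<Sum>y\<in>closed_nbhd (cycle_V m) (cycle_adj m) i. g y)" if i: "i \<in> cycle_V m" for i
  proof -
    have "Inl i \<in> join_V (cycle_V m) (cycle_V n)"
      using i by (auto simp: join_V_def)
    then have "1 \<le> (\<Sum>z\<in>closed_nbhd (join_V (cycle_V m) (cycle_V n)) (join_adj (cycle_adj m) (cycle_adj n)) (Inl i). f z)"
      using srdf unfolding is_SRDF_def by blast
    then show ?thesis
      unfolding sum_closed_nbhd_join_Inl[OF fin fin i] S2_def g_def h_def by simp
  qed
  have nbhd_n: "1 - S1 \<le> (\<Sum>y\<in>closed_nbhd (cycle_V n) (cycle_adj n) j. h y)" if j: "j \<in> cycle_V n" for j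
  proof -
    have "Inr j \<in> join_V (cycle_V m) (cycle_V n)"
      using j by (auto simp: join_V_def)
    then have "1 \<le> (\<Sum>z\<in>closed_nbhd (join_V (cycle_V m) (cycle_V n)) (join_adj (cycle_adj m) (cycle_adj n)) (Inr j). f z)"
      using srdf unfolding is_SRDF_def by blast
    then show ?thesis
      unfolding sum_closed_nbhd_join_Inr[OF fin fin j] S1_def g_def h_def by simp
  qed
  \<comment> \<open>summing the neighbourhood conditions over a cycle counts every vertex three times\<close>
  have avg_m: "int m * (1 - S2) \<le> 3 * S1"
  proof -
    have "int m * (1 - S2) = (\<Sum>i\<in>cycle_V m. 1 - S2)"
      by (simp add: cycle_V_def)
    also have "\<dots> \<le> (\<Sum>i\<in>cycle_V m. \<Sum>y\<in>closed_nbhd (cycle_V m) (cycle_adj m) i. g y)"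
      by (rule sum_mono) (rule nbhd_m)
    also have "\<dots> = 3 * S1"
      unfolding S1_def using m by (intro sum_closed_nbhd_sums_cycle) simp
    finally show ?thesis .
  qed
  have avg_n: "int n * (1 - S1) \<le> 3 * S2"
  proof -
    have "int n * (1 - S1) = (\<Sum>j\<in>cycle_V n. 1 - S1)"
      by (simp add: cycle_V_def)
    also have "\<dots> \<le> (\<Sum>j\<in>cycle_V n. \<Sum>y\<in>closed_nbhd (cycle_V n) (cycle_adj n) j. h y)"
      by (rule sum_mono) (rule nbhd_n)
    also have "\<dots> = 3 * S2"
      unfolding S2_def using n by (intro sum_closed_nbhd_sums_cycle) simp
    finally show ?thesis .
  qed
  have "1 \<le> S2"
  proof (rule ccontr)
    assume "\<not> 1 \<le> S2"
    then have "7 * (1 - S2) \<le> int m * (1 - S2)"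
      using m(1) by (intro mult_right_mono) simp_all
    then have "7 * (1 - S2) \<le> 3 * S1"
      using avg_m by (rule order.trans)
    with light \<open>\<not> 1 \<le> S2\<close> show False
      by presburger
  qed
  moreover have "1 \<le> S1"
  proof (rule ccontr)
    assume "\<not> 1 \<le> S1"
    then have "7 * (1 - S1) \<le> int n * (1 - S1)"
      using n by (intro mult_right_mono) simp_all
    then have "7 * (1 - S1) \<le> 3 * S2"
      using avg_n by (rule order.trans)
    with light \<open>\<not> 1 \<le> S1\<close> show False
      by presburger
  qed
  ultimately have S1: "S1 = 1" and S2: "S2 = 1"
    using light by linarith+
  define G where "G k = g (k mod m)" for k
  have "(\<Sum>k<m. G k) \<noteq> 1"
  proof (rule period_sum_ne_1)
    show "G (k + m) = G k" for k
      by (simp add: G_def)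
    show "4 \<le> m" "m mod 3 \<noteq> 2"
      using m by simp_all
    show "G k \<in> {-1, 1, 2}" for k
      using srdf m(1) unfolding is_SRDF_def G_def g_def join_V_def cycle_V_def by auto
    show "0 \<le> G k + G (k + 1) + G (k + 2)" for k
      using nbhd_m closed_nbhd_sums_cycle_ge_iff[of m 0 g] m(1) unfolding S2 G_def by simp
  qed
  then show False
    using S1 unfolding S1_def G_def weight_def cycle_V_eq_lessThan by simp
qed

text \<open>The pattern \<open>2, -1, -1\<close> repeated from vertex 0; when \<open>3 | m\<close>, vertex 1 is raised to 1 so
that the weight is 2 in both residue classes \<open>m mod 3 \<in> {0, 1}\<close>.\<close>

definition cycle_pattern :: "nat \<Rightarrow> nat \<Rightarrow> int" where
  "cycle_pattern m i = (if i mod 3 = 0 then 2 else if m mod 3 = 0 \<and> i = 1 then 1 else -1)"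

lemma cycle_pattern_range: "cycle_pattern m i \<in> {-1, 1, 2}"
  unfolding cycle_pattern_def by simp

lemma cycle_pattern_multiple_of_3: "i mod 3 = 0 \<Longrightarrow> cycle_pattern m i = 2"
  unfolding cycle_pattern_def by simp

lemma weight_cycle_pattern:
  assumes "3 \<le> m" "m mod 3 \<noteq> 2"
  shows "weight (cycle_V m) (cycle_pattern m) = 2"
proof -
  define t where "t = m div 3"
  have "0 < t"
    using assms(1) unfolding t_def by simp
  have triple: "cycle_pattern m (0 + 3*i) + cycle_pattern m (0 + 3*i + 1) + cycle_pattern m (0 + 3*i + 2)
                  = (if m mod 3 = 0 \<and> i = 0 then 2 else 0)" for i
    unfolding cycle_pattern_def by (simp add: mod_Suc)
  have blocks: "(\<Sum>j<3*t. cycle_pattern m j) = (if m mod 3 = 0 then 2 else 0)"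
  proof -
    have "(\<Sum>j<3*t. cycle_pattern m (0 + j)) = (\<Sum>i<t. if m mod 3 = 0 \<and> i = 0 then 2 else 0)"
      unfolding sum_lessThan_triples triple ..
    then show ?thesis
      using \<open>0 < t\<close> by simp
  qed
  have "m = 3*t \<or> m = 3*t + 1"
    using assms(2) unfolding t_def by presburger
  then show ?thesis
  proof
    assume "m = 3*t"
    then show ?thesis
      using blocks by (simp add: weight_def cycle_V_eq_lessThan)
  next
    assume m_eq: "m = 3*t + 1"
    have "weight (cycle_V m) (cycle_pattern m) = (\<Sum>j<3*t. cycle_pattern m j) + cycle_pattern m (3*t)"
      unfolding weight_def cycle_V_eq_lessThan m_eq by simp
    then show ?thesis
      using blocks m_eq cycle_pattern_multiple_of_3[of "3*t" m] by simp
  qed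
qed

lemma cyclic_triple_meets_multiple_of_3:
  fixes k m :: nat
  assumes "0 < m"
  shows "\<exists>j\<in>{k mod m, (k + 1) mod m, (k + 2) mod m}. j mod 3 = 0"
proof -
  define i where "i = k mod m"
  have "i < m"
    using assms unfolding i_def by (rule mod_less_divisor)
  moreover have succ: "(k + 1) mod m = (i + 1) mod m" and succ2: "(k + 2) mod m = (i + 2) mod m"
    unfolding i_def by (simp_all add: mod_simps)
  ultimately consider "i + 2 < m" | "i + 1 = m" | "i + 2 = m"
    by linarith
  then show ?thesis
  proof cases
    case 1
    then have "(k + 1) mod m = i + 1" "(k + 2) mod m = i + 2"
      unfolding succ succ2 by simp_all
    moreover have "i mod 3 = 0 \<or> (i + 1) mod 3 = 0 \<or> (i + 2) mod 3 = 0"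
      by presburger
    ultimately show ?thesis
      unfolding i_def[symmetric] by auto
  next
    case 2
    then have "(k + 1) mod m = 0"
      unfolding succ by simp
    then show ?thesis
      by auto
  next
    case 3
    then have "(k + 2) mod m = 0"
      unfolding succ2 by simp
    then show ?thesis
      by auto
  qed
qed

lemma signed_triple_sum_lower_bound:
  fixes a b c :: int
  assumes "a \<in> {-1, 1, 2}" "b \<in> {-1, 1, 2}" "c \<in> {-1, 1, 2}" and "d \<in> {a, b, c}"
  shows "d - 2 \<le> a + b + c"
  using assms by auto

lemma cycle_pattern_windows:
  assumes "0 < m"
  shows "0 \<le> cycle_pattern m (k mod m) + cycle_pattern m ((k + 1) mod m) + cycle_pattern m ((k + 2) mod m)"
proof -
  obtain j where j: "j \<in> {k mod m, (k + 1) mod m, (k + 2) mod m}" "j mod 3 = 0"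
    using cyclic_triple_meets_multiple_of_3[OF assms, of k] ..
  then have "cycle_pattern m j
      \<in> {cycle_pattern m (k mod m), cycle_pattern m ((k + 1) mod m), cycle_pattern m ((k + 2) mod m)}"
    by blast
  then have "cycle_pattern m j - 2
      \<le> cycle_pattern m (k mod m) + cycle_pattern m ((k + 1) mod m) + cycle_pattern m ((k + 2) mod m)"
    by (rule signed_triple_sum_lower_bound[OF cycle_pattern_range cycle_pattern_range cycle_pattern_range])
  then show ?thesis
    using cycle_pattern_multiple_of_3[OF j(2)] by simp
qed

lemma lowered_cycle_pattern_windows:
  assumes "0 < m"
  defines "g \<equiv> (cycle_pattern m)(0 := 1)"
  shows "-1 \<le> g (k mod m) + g ((k + 1) mod m) + g ((k + 2) mod m)"
proof -
  have range: "g i \<in> {-1, 1, 2}" for i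
    using cycle_pattern_range[of m i] unfolding g_def by simp
  obtain j where j: "j \<in> {k mod m, (k + 1) mod m, (k + 2) mod m}" "j mod 3 = 0"
    using cyclic_triple_meets_multiple_of_3[OF assms(1), of k] ..
  then have "g j \<in> {g (k mod m), g ((k + 1) mod m), g ((k + 2) mod m)}"
    by blast
  then have "g j - 2 \<le> g (k mod m) + g ((k + 1) mod m) + g ((k + 2) mod m)"
    by (rule signed_triple_sum_lower_bound[OF range range range])
  moreover have "1 \<le> g j"
    using cycle_pattern_multiple_of_3[OF j(2)] unfolding g_def by simp
  ultimately show ?thesis
    by simp
qed

lemma weight_fun_upd:
  assumes "finite V" "x \<in> V"
  shows "weight V (f(x := a)) = weight V f + (a - f x)"
  unfolding weight_def using assms by (simp add: sum.remove)

lemma SRDF_join_cycles_weight_3: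
  assumes m: "3 \<le> m" "m mod 3 \<noteq> 2" and n: "4 \<le> n" "n mod 3 \<noteq> 2"
  obtains f where "is_SRDF (join_V (cycle_V m) (cycle_V n)) (join_adj (cycle_adj m) (cycle_adj n)) f"
    and "weight (join_V (cycle_V m) (cycle_V n)) f = 3"
proof
  define g1 where "g1 = cycle_pattern m"
  define g2 where "g2 = (cycle_pattern n)(0 := 1)"
  have fin: "finite (cycle_V k)" for k
    by (simp add: cycle_V_def)
  have n3: "3 \<le> n"
    using n(1) by simp
  have w1: "weight (cycle_V m) g1 = 2"
    unfolding g1_def using m by (rule weight_cycle_pattern)
  have w2: "weight (cycle_V n) g2 = 1"
    using weight_fun_upd[OF fin, of 0 n "cycle_pattern n" 1] weight_cycle_pattern[OF _ n(2)] n(1)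
      cycle_pattern_multiple_of_3[of 0 n]
    unfolding g2_def by (simp add: cycle_V_def)
  have nbhd1: "\<forall>i\<in>cycle_V m. 0 \<le> (\<Sum>y\<in>closed_nbhd (cycle_V m) (cycle_adj m) i. g1 y)"
    unfolding closed_nbhd_sums_cycle_ge_iff[OF m(1)] g1_def
    by (intro allI cycle_pattern_windows) (use m(1) in simp)
  have nbhd2: "\<forall>j\<in>cycle_V n. -1 \<le> (\<Sum>y\<in>closed_nbhd (cycle_V n) (cycle_adj n) j. g2 y)"
    unfolding closed_nbhd_sums_cycle_ge_iff[OF n3] g2_def
    by (intro allI lowered_cycle_pattern_windows) (use n(1) in simp_all)
  show "is_SRDF (join_V (cycle_V m) (cycle_V n)) (join_adj (cycle_adj m) (cycle_adj n)) (case_sum g1 g2)"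
  proof (rule is_SRDF_join_case_sumI)
    show "\<forall>x\<in>cycle_V m. g1 x \<in> {-1, 1, 2}" "\<forall>y\<in>cycle_V n. g2 y \<in> {-1, 1, 2}"
      using cycle_pattern_range unfolding g1_def g2_def by auto
    show "\<exists>x\<in>cycle_V m. g1 x = 2"
      using m(1) cycle_pattern_multiple_of_3[of 0 m] unfolding g1_def cycle_V_def
      by (intro bexI[of _ 0]) simp_all
    show "\<exists>y\<in>cycle_V n. g2 y = 2"
      using n(1) cycle_pattern_multiple_of_3[of 3 n] unfolding g2_def cycle_V_def
      by (intro bexI[of _ 3]) simp_all
    show "\<forall>x\<in>cycle_V m. 1 \<le> (\<Sum>z\<in>closed_nbhd (cycle_V m) (cycle_adj m) x. g1 z) + weight (cycle_V n) g2"
      using nbhd1 unfolding w2 by simp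
    show "\<forall>y\<in>cycle_V n. 1 \<le> weight (cycle_V m) g1 + (\<Sum>z\<in>closed_nbhd (cycle_V n) (cycle_adj n) y. g2 z)"
      using nbhd2 unfolding w1 by force
  qed (rule fin)+
  show "weight (join_V (cycle_V m) (cycle_V n)) (case_sum g1 g2) = 3"
    using w1 w2 by (simp add: weight_join[OF fin fin] comp_def)
qed

theorem mainTheorem11:
  fixes m n :: nat
  assumes "m \<ge> 13" and "n \<ge> 13" and "m mod 3 \<noteq> 2" and "n mod 3 \<noteq> 2"
  shows "gamma_sR (join_V (cycle_V m) (cycle_V n)) (join_adj (cycle_adj m) (cycle_adj n)) = 3"
proof -
  obtain f where srdf: "is_SRDF (join_V (cycle_V m) (cycle_V n)) (join_adj (cycle_adj m) (cycle_adj n)) f"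
    and weight_3: "weight (join_V (cycle_V m) (cycle_V n)) f = 3"
    by (rule SRDF_join_cycles_weight_3[of m n]) (use assms in simp_all)
  have "finite (join_V (cycle_V m) (cycle_V n))"
    by (simp add: join_V_def cycle_V_def)
  then have "gamma_sR (join_V (cycle_V m) (cycle_V n)) (join_adj (cycle_adj m) (cycle_adj n))
               = weight (join_V (cycle_V m) (cycle_V n)) f"
    by (rule gamma_sR_eqI[OF _ srdf])
      (use SRDF_join_cycles_weight_ge_3[of m n] assms weight_3 in simp)
  then show ?thesis
    using weight_3 by simp
qed

end
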